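(* Let $A\in\mathscr R$ be fixed and let $V_1,V_2$ be distributions on $[0,\infty)^d$ with $V_1,V_2\in\mathcal L_A$ and $K^-_{V_A^{(1)}}\wedge K^-_{V_A^{(2)}}>0$, where $V_A^{(i)}$ denotes $(V_i)_A$. Then $V_1*V_2\in\mathcal A^*_A$ if and only if $V_A^{(1)}*V_A^{(2)}\in\mathcal A^*$.
   Context: $\mathscr R$ is the family of open, increasing ($\mathbf z\in A,\mathbf y\in[0,\infty)^d\Rightarrow\mathbf z+\mathbf y\in A$) sets $A\subsetneq\mathbb R^d$ with convex complement and $\mathbf 0\notin\overline A$. For a distribution $V$ on $[0,\infty)^d$ with $\mathbf Z\sim V$, $V_A$ is the (proper) distribution of $Z_A=\sup\{u:\mathbf Z\in uA\}$, so $\overline{V_A}(x)=\mathbf P(\mathbf Z\in xA)$. $V_1*V_2\in\mathcal B_A$ means: for independent $\mathbf Z^{(1)}\sim V_1,\mathbf Z^{(2)}\sim V_2$, the distribution of $\sup\{u:\mathbf Z^{(1)}+\mathbf Z^{(2)}\in uA\}$ is in $\mathcal B$. One-dimensional classes (distributions with infinite right endpoint): $\mathcal L$: $\overline B(x-y)/\overline B(x)\to1$ for all $y>0$; $\mathcal S$: $\overline{B^{n*}}(x)\sim n\overline B(x)$, $n\ge2$; $\overline{B^*}(v)=\limsup_x\overline B(vx)/\overline B(x)$, $K_B^-=-\lim_{v\downarrow1}\log\overline{B^*}(v)/\log v$; $\mathcal A^*=\{B\in\mathcal S:K_B^->0\}$. $V\in\mathcal L_A$ iff $V_A\in\mathcal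 L$; $V\in\mathcal A^*_A$ iff $V_A\in\mathcal A^*$. *)

theory Defs
  imports "HOL-Analysis.Analysis" "HOL-Probability.Probability" "HOL-Probability.Convolution"
begin

definition orthant :: "(real ^ 'd) set" where
  "orthant = {x. \<forall>i. 0 \<le> x $ i}"

definition classR :: "(real ^ 'd) set \<Rightarrow> bool" where
  "classR A \<longleftrightarrow> open A \<and> A \<noteq> UNIV
     \<and> (\<forall>z\<in>A. \<forall>y\<in>orthant. z + y \<in> A)
     \<and> convex (- A) \<and> 0 \<notin> closure A"

definition distr_orthant :: "(real ^ 'd) measure \<Rightarrow> bool" where
  "distr_orthant V \<longleftrightarrow> prob_space V \<and> sets V = sets borel \<and> emeasure V orthant = 1"

text \<open>Z_A = sup{u : z in uA} (u > 0; the supremum of the empty set is taken to be 0).\<close>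
definition ZA :: "(real ^ 'd) set \<Rightarrow> real ^ 'd \<Rightarrow> real" where
  "ZA A z = Sup ({u. u > 0 \<and> z \<in> (\<lambda>a. u *\<^sub>R a) ` A} \<union> {0})"

definition VA :: "(real ^ 'd) set \<Rightarrow> (real ^ 'd) measure \<Rightarrow> real measure" where
  "VA A V = distr V borel (ZA A)"

definition vconv :: "(real ^ 'd) measure \<Rightarrow> (real ^ 'd) measure \<Rightarrow> (real ^ 'd) measure" where
  "vconv V1 V2 = distr (V1 \<Otimes>\<^sub>M V2) borel (\<lambda>(x, y). x + y)"

definition tail :: "real measure \<Rightarrow> real \<Rightarrow> real" where
  "tail B x = measure B {x<..}"

definition inf_right_endpoint :: "real measure \<Rightarrow> bool" where
  "inf_right_endpoint B \<longleftrightarrow> (\<forall>x. tail B x > 0)"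

definition classL :: "real measure \<Rightarrow> bool" where
  "classL B \<longleftrightarrow> inf_right_endpoint B \<and>
     (\<forall>y>0. ((\<lambda>x. tail B (x - y) / tail B x) \<longlongrightarrow> 1) at_top)"

fun conv_pow :: "real measure \<Rightarrow> nat \<Rightarrow> real measure" where
  "conv_pow B 0 = return borel 0"
| "conv_pow B (Suc n) = (B \<star> conv_pow B n)"

definition classS :: "real measure \<Rightarrow> bool" where
  "classS B \<longleftrightarrow> inf_right_endpoint B \<and>
     (\<forall>n::nat. n \<ge> 2 \<longrightarrow> ((\<lambda>x. tail (conv_pow B n) x / (real n * tail B x)) \<longlongrightarrow> 1) at_top)"

definition Bstar :: "real measure \<Rightarrow> real \<Rightarrow> ereal" where
  "Bstar B v = Limsup at_top (\<lambda>x. ereal (tail B (v * x) / tail B x))"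

text \<open>K_B^- = - lim_{v -> 1+} log overline{B^*}(v) / log v, with log 0 = -oo
  (so the quotient is +oo when overline{B^*}(v) = 0).\<close>
definition Kminus :: "real measure \<Rightarrow> ereal" where
  "Kminus B = Lim (at_right 1)
     (\<lambda>v. if Bstar B v = 0 then \<infinity> else ereal (- ln (real_of_ereal (Bstar B v)) / ln v))"

definition classAstar :: "real measure \<Rightarrow> bool" where
  "classAstar B \<longleftrightarrow> classS B \<and> Kminus B > 0"

end

(* Let H1, H2 be the laws of the radial variables of V1, V2 and F that of V1 * V2. Since Z_A is
   monotone along the orthant and subadditive (by convexity of the complement of A),
   max (Z1_A, Z2_A) <= (Z1 + Z2)_A <= Z1_A + Z2_A, so the tail of F lies between
   P(Z1_A > t or Z2_A > t) and the tail of H1 * H2. Whichever of F and H1 * H2 is subexponential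
   dominates the long-tailed H1 and H2, and the one-big-jump estimate with this dominating
   distribution gives tail (H1 * H2) ~ tail H1 + tail H2; by the sandwich, F has the same tail.
   Subexponentiality and the index K^- are invariant under tail equivalence. *)

theory Submission
  imports Defs "HOL-Library.Landau_Symbols"
begin

locale nonneg_distribution = real_distribution +
  assumes AE_nonneg: "AE x in M. 0 \<le> x"

lemma tail_nonneg: "0 \<le> tail M x"
  by (simp add: tail_def)

context real_distribution
begin

lemma prob_UNIV [simp]: "prob UNIV = 1"
  using prob_space by simp

lemma tail_le_1: "tail M x \<le> 1"
  by (simp add: tail_def)

lemma tail_antimono: "x \<le> y \<Longrightarrow> tail M y \<le> tail M x"
  unfolding tail_def by (intro finite_measure_mono) auto

lemma tail_eq_1_minus_cdf: "tail M x = 1 - cdf M x"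
proof -
  have "UNIV - {..x} = {x<..}" by auto
  then show ?thesis
    using prob_compl[of "{..x}"] by (simp add: tail_def cdf_def)
qed

lemma borel_measurable_tail [measurable]: "tail M \<in> borel_measurable borel"
proof -
  have "cdf M \<in> borel_measurable borel"
    by (intro borel_measurable_mono monoI cdf_nondecreasing)
  then show ?thesis
    by (simp add: tail_eq_1_minus_cdf[abs_def])
qed

lemma tendsto_tail_at_top: "(tail M \<longlongrightarrow> 0) at_top"
  using tendsto_diff[OF tendsto_const cdf_lim_at_top_prob, of 1]
  by (simp add: tail_eq_1_minus_cdf[abs_def])

lemma measure_Ioc_eq_tail_diff:
  assumes "x \<le> y" shows "measure M {x<..y} = tail M x - tail M y"
proof -
  have "{x<..y} = {x<..} - {y<..}" using assms by auto
  then show ?thesis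
    using assms by (simp add: tail_def finite_measure_Diff)
qed

lemma measure_atMost_eq: "measure M {..x} = 1 - tail M x"
  by (simp add: tail_eq_1_minus_cdf cdf_def)

end

section \<open>Tails of convolutions\<close>

lemma real_distribution_convolution:
  assumes "real_distribution X" "real_distribution Y"
  shows "real_distribution (X \<star> Y)"
proof -
  interpret X: real_distribution X by fact
  interpret Y: real_distribution Y by fact
  interpret XY: prob_space "X \<Otimes>\<^sub>M Y"
    by (rule prob_space_pair) unfold_locales
  show ?thesis
    unfolding convolution_def real_distribution_def real_distribution_axioms_def
    by (auto intro!: XY.prob_space_distr)
qed

lemma Collect_in_sets_pair_borel:
  assumes "sets X = sets borel" "sets Y = sets borel" "Measurable.pred (borel \<Otimes>\<^sub>M borel) P"
  shows "{p. P p} \<in> sets (X \<Otimes>\<^sub>M Y)"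
proof -
  have "space (borel \<Otimes>\<^sub>M borel) = (UNIV :: ('a \<times> 'b) set)"
    by (simp add: space_pair_measure)
  then show ?thesis
    using assms(3) by (simp add: pred_def sets_pair_measure_cong[OF assms(1,2)])
qed

lemma measure_pair_Times:
  assumes "prob_space M" "prob_space N" "A \<in> sets M" "B \<in> sets N"
  shows "measure (M \<Otimes>\<^sub>M N) (A \<times> B) = measure M A * measure N B"
proof -
  interpret N: prob_space N by fact
  interpret pair_sigma_finite M N
    by (intro pair_sigma_finite.intro prob_space_imp_sigma_finite assms)
  show ?thesis
    using assms by (simp add: measure_def N.emeasure_pair_measure_Times enn2real_mult)
qed

lemma measure_pair_either:
  assumes "prob_space M" "prob_space N" "A \<in> sets M" "B \<in> sets N"
  shows "measure (M \<Otimes>\<^sub>M N) {p \<in> space (M \<Otimes>\<^sub>M N). fst p \<in> A \<or> snd p \<in> B}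
     = measure M A + measure N B - measure M A * measure N B"
proof -
  interpret M: prob_space M by fact
  interpret N: prob_space N by fact
  interpret MN: prob_space "M \<Otimes>\<^sub>M N"
    by (rule prob_space_pair) unfold_locales
  have "{p \<in> space (M \<Otimes>\<^sub>M N). fst p \<in> A \<or> snd p \<in> B}
      = space (M \<Otimes>\<^sub>M N) - (space M - A) \<times> (space N - B)"
    by (auto simp: space_pair_measure)
  moreover have "measure (M \<Otimes>\<^sub>M N) ((space M - A) \<times> (space N - B)) = (1 - measure M A) * (1 - measure N B)"
    using assms by (simp add: measure_pair_Times M.prob_compl N.prob_compl)
  ultimately show ?thesis
    using assms MN.prob_compl[of "(space M - A) \<times> (space N - B)"] by (simp add: algebra_simps)
qed

lemma tail_convolution:
  assumes "real_distribution X" "real_distribution Y"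
  shows "tail (X \<star> Y) x = measure (X \<Otimes>\<^sub>M Y) {p. x < fst p + snd p}"
proof -
  interpret X: real_distribution X by fact
  interpret Y: real_distribution Y by fact
  show ?thesis
    unfolding tail_def convolution_def
    by (subst measure_distr) (auto simp: space_pair_measure intro!: arg_cong[where f = "measure _"])
qed

lemma AE_pair_in_Times:
  assumes M: "sigma_finite_measure M" and N: "sigma_finite_measure N"
    and [measurable]: "A \<in> sets M" "B \<in> sets N"
    and "AE x in M. x \<in> A" "AE y in N. y \<in> B"
  shows "AE p in M \<Otimes>\<^sub>M N. fst p \<in> A \<and> snd p \<in> B"
proof -
  interpret pair_sigma_finite M N
    by (intro pair_sigma_finite.intro M N)
  have "{p \<in> space (M \<Otimes>\<^sub>M N). fst p \<in> A \<and> snd p \<in> B} \<in> sets (M \<Otimes>\<^sub>M N)"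
    by measurable
  moreover have "AE x in M. AE y in N. x \<in> A \<and> y \<in> B"
    using assms(5,6) by (auto elim!: AE_mp)
  ultimately show ?thesis
    by (subst (asm) AE_pair_iff) auto
qed

lemma AE_pair_nonneg:
  assumes "nonneg_distribution X" "nonneg_distribution Y"
  shows "AE p in X \<Otimes>\<^sub>M Y. fst p \<in> {0..} \<and> snd p \<in> {0..}"
proof -
  interpret X: nonneg_distribution X by fact
  interpret Y: nonneg_distribution Y by fact
  show ?thesis
    using X.AE_nonneg Y.AE_nonneg
    by (intro AE_pair_in_Times X.sigma_finite_measure Y.sigma_finite_measure) auto
qed

lemma measure_le_tail_convolution:
  assumes X: "nonneg_distribution X" and Y: "nonneg_distribution Y" and S: "S \<in> sets (X \<Otimes>\<^sub>M Y)"
    and sum_gt: "\<And>a b. 0 \<le> a \<Longrightarrow> 0 \<le> b \<Longrightarrow> (a, b) \<in> S \<Longrightarrow> x < a + b"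
  shows "measure (X \<Otimes>\<^sub>M Y) S \<le> tail (X \<star> Y) x"
proof -
  interpret X: nonneg_distribution X by fact
  interpret Y: nonneg_distribution Y by fact
  interpret XY: prob_space "X \<Otimes>\<^sub>M Y"
    by (rule prob_space_pair) unfold_locales
  show ?thesis
    unfolding tail_convolution[OF X.real_distribution_axioms Y.real_distribution_axioms]
  proof (rule XY.finite_measure_mono_AE)
    show "AE p in X \<Otimes>\<^sub>M Y. p \<in> S \<longrightarrow> p \<in> {p. x < fst p + snd p}"
      using AE_pair_nonneg[OF X Y] by eventually_elim (use sum_gt in force)
    show "{p. x < fst p + snd p} \<in> sets (X \<Otimes>\<^sub>M Y)"
      by (rule Collect_in_sets_pair_borel[OF X.events_eq_borel Y.events_eq_borel])
        measurable
  qed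
qed

lemma tail_convolution_ge:
  assumes X: "nonneg_distribution X" and Y: "nonneg_distribution Y"
  shows "tail X x + tail Y x - tail X x * tail Y x \<le> tail (X \<star> Y) x"
proof -
  interpret X: nonneg_distribution X by fact
  interpret Y: nonneg_distribution Y by fact
  have "tail X x + tail Y x - tail X x * tail Y x
      = measure (X \<Otimes>\<^sub>M Y) {p \<in> space (X \<Otimes>\<^sub>M Y). fst p \<in> {x<..} \<or> snd p \<in> {x<..}}"
    unfolding tail_def
    by (rule measure_pair_either[symmetric]) (auto simp: X.prob_space_axioms Y.prob_space_axioms)
  also have "\<dots> \<le> tail (X \<star> Y) x"
    by (rule measure_le_tail_convolution[OF X Y], measurable)
      (auto simp: add_strict_increasing add_strict_increasing2)
  finally show ?thesis .
qed

definition both_exceed :: "real \<Rightarrow> real \<Rightarrow> (real \<times> real) set" where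
  "both_exceed h x = {p. h < fst p \<and> h < snd p \<and> x < fst p + snd p}"

lemma both_exceed_in_sets:
  "real_distribution X \<Longrightarrow> real_distribution Y \<Longrightarrow> both_exceed h x \<in> sets (X \<Otimes>\<^sub>M Y)"
  unfolding both_exceed_def
  by (rule Collect_in_sets_pair_borel) (auto simp: real_distribution.events_eq_borel)

lemma tail_convolution_le_both_exceed:
  assumes X: "real_distribution X" and Y: "real_distribution Y"
  shows "tail (X \<star> Y) x \<le> tail X (x - h) + tail Y (x - h) + measure (X \<Otimes>\<^sub>M Y) (both_exceed h x)"
proof -
  interpret X: real_distribution X by fact
  interpret Y: real_distribution Y by fact
  interpret XY: prob_space "X \<Otimes>\<^sub>M Y"
    by (rule prob_space_pair) unfold_locales
  let ?S1 = "{x - h<..} \<times> UNIV" and ?S2 = "UNIV \<times> {x - h<..}" and ?U = "both_exceed h x"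
  have sets: "?S1 \<in> sets (X \<Otimes>\<^sub>M Y)" "?S2 \<in> sets (X \<Otimes>\<^sub>M Y)" "?U \<in> sets (X \<Otimes>\<^sub>M Y)"
    using both_exceed_in_sets[OF X Y] by (auto intro!: pair_measureI)
  have "tail (X \<star> Y) x \<le> measure (X \<Otimes>\<^sub>M Y) (?S1 \<union> ?S2 \<union> ?U)"
    unfolding tail_convolution[OF X Y] using sets
    by (intro XY.finite_measure_mono) (auto simp: both_exceed_def)
  also have "\<dots> \<le> measure (X \<Otimes>\<^sub>M Y) ?S1 + measure (X \<Otimes>\<^sub>M Y) ?S2 + measure (X \<Otimes>\<^sub>M Y) ?U"
    using sets by (meson measure_Un_le add_right_mono order.trans sets.Un)
  also have "measure (X \<Otimes>\<^sub>M Y) ?S1 = tail X (x - h)"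
    using measure_pair_Times[of X Y "{x - h<..}" UNIV] by (simp add: tail_def X.prob_space_axioms Y.prob_space_axioms)
  also have "measure (X \<Otimes>\<^sub>M Y) ?S2 = tail Y (x - h)"
    using measure_pair_Times[of X Y UNIV "{x - h<..}"] by (simp add: tail_def X.prob_space_axioms Y.prob_space_axioms)
  finally show ?thesis .
qed

lemma emeasure_both_exceed:
  assumes X: "real_distribution X" and Y: "real_distribution Y"
  shows "emeasure (X \<Otimes>\<^sub>M Y) (both_exceed h x)
      = (\<integral>\<^sup>+a. indicator {h<..} a * ennreal (tail Y (max h (x - a))) \<partial>X)"
    and "emeasure (X \<Otimes>\<^sub>M Y) (both_exceed h x)
      = (\<integral>\<^sup>+b. indicator {h<..} b * ennreal (tail X (max h (x - b))) \<partial>Y)"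
proof -
  interpret X: real_distribution X by fact
  interpret Y: real_distribution Y by fact
  interpret pair_sigma_finite X Y ..
  have U: "both_exceed h x \<in> sets (X \<Otimes>\<^sub>M Y)"
    by (rule both_exceed_in_sets[OF X Y])
  have "Pair a -` both_exceed h x = (if h < a then {max h (x - a)<..} else {})" for a
    by (auto simp: both_exceed_def)
  then show "emeasure (X \<Otimes>\<^sub>M Y) (both_exceed h x)
      = (\<integral>\<^sup>+a. indicator {h<..} a * ennreal (tail Y (max h (x - a))) \<partial>X)"
    unfolding Y.emeasure_pair_measure_alt[OF U]
    by (intro nn_integral_cong) (simp add: tail_def Y.emeasure_eq_measure indicator_def)
  have "(\<lambda>a. (a, b)) -` both_exceed h x = (if h < b then {max h (x - b)<..} else {})" for b
    by (auto simp: both_exceed_def)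
  then show "emeasure (X \<Otimes>\<^sub>M Y) (both_exceed h x)
      = (\<integral>\<^sup>+b. indicator {h<..} b * ennreal (tail X (max h (x - b))) \<partial>Y)"
    unfolding emeasure_pair_measure_alt2[OF U]
    by (intro nn_integral_cong) (simp add: tail_def X.emeasure_eq_measure indicator_def)
qed

lemma nn_integral_tail_section_le:
  assumes W: "real_distribution W" and D: "real_distribution D" and c: "0 \<le> c"
    and ZD: "\<And>t. h \<le> t \<Longrightarrow> tail Z t \<le> c * tail D t"
  shows "(\<integral>\<^sup>+a. indicator {h<..} a * ennreal (tail Z (max h (x - a))) \<partial>W)
    \<le> ennreal c * (\<integral>\<^sup>+a. indicator {h<..} a * ennreal (tail D (max h (x - a))) \<partial>W)"
proof -
  interpret W: real_distribution W by fact
  have [measurable]: "tail D \<in> borel_measurable borel"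
    by (rule real_distribution.borel_measurable_tail[OF D])
  have "(\<integral>\<^sup>+a. indicator {h<..} a * ennreal (tail Z (max h (x - a))) \<partial>W)
      \<le> (\<integral>\<^sup>+a. ennreal c * (indicator {h<..} a * ennreal (tail D (max h (x - a)))) \<partial>W)"
    using c ZD
    by (intro nn_integral_mono) (auto simp: indicator_def ennreal_mult[symmetric] tail_nonneg intro!: ennreal_leI)
  also have "\<dots> = ennreal c * (\<integral>\<^sup>+a. indicator {h<..} a * ennreal (tail D (max h (x - a))) \<partial>W)"
    by (rule nn_integral_cmult) measurable
  finally show ?thesis .
qed

text \<open>Integrating over one coordinate at a time replaces first \<open>Y\<close> and then \<open>X\<close> by \<open>D\<close>.\<close>

lemma measure_both_exceed_le:
  assumes X: "real_distribution X" and Y: "real_distribution Y" and D: "real_distribution D"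
    and c: "0 \<le> c"
    and XD: "\<And>t. h \<le> t \<Longrightarrow> tail X t \<le> c * tail D t"
    and YD: "\<And>t. h \<le> t \<Longrightarrow> tail Y t \<le> c * tail D t"
  shows "measure (X \<Otimes>\<^sub>M Y) (both_exceed h x) \<le> c\<^sup>2 * measure (D \<Otimes>\<^sub>M D) (both_exceed h x)"
proof -
  interpret XY: prob_space "X \<Otimes>\<^sub>M Y"
    using X Y by (intro prob_space_pair) (auto simp: real_distribution_def)
  interpret DD: prob_space "D \<Otimes>\<^sub>M D"
    using D by (intro prob_space_pair) (auto simp: real_distribution_def)
  have "emeasure (X \<Otimes>\<^sub>M Y) (both_exceed h x) \<le> ennreal c * emeasure (X \<Otimes>\<^sub>M D) (both_exceed h x)"
    unfolding emeasure_both_exceed(1)[OF X Y] emeasure_both_exceed(1)[OF X D]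
    by (rule nn_integral_tail_section_le[OF X D c YD])
  also have "emeasure (X \<Otimes>\<^sub>M D) (both_exceed h x) \<le> ennreal c * emeasure (D \<Otimes>\<^sub>M D) (both_exceed h x)"
    unfolding emeasure_both_exceed(2)[OF X D] emeasure_both_exceed(2)[OF D D]
    by (rule nn_integral_tail_section_le[OF D D c XD])
  finally have "ennreal (measure (X \<Otimes>\<^sub>M Y) (both_exceed h x))
      \<le> ennreal (c\<^sup>2 * measure (D \<Otimes>\<^sub>M D) (both_exceed h x))"
    using c by (simp add: XY.emeasure_eq_measure DD.emeasure_eq_measure mult_left_mono
        ennreal_mult[symmetric] power2_eq_square mult.assoc)
  then show ?thesis
    using c by (simp add: ennreal_le_iff)
qed

lemma measure_both_exceed_le_tail_convolution:
  assumes D: "nonneg_distribution D" and hx: "h \<le> x"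
  shows "measure (D \<Otimes>\<^sub>M D) (both_exceed h x) \<le> tail (D \<star> D) x - 2 * (1 - tail D h) * tail D x"
proof -
  interpret D: nonneg_distribution D by fact
  interpret DD: prob_space "D \<Otimes>\<^sub>M D"
    by (rule prob_space_pair) unfold_locales
  let ?U = "both_exceed h x" and ?R1 = "{..h} \<times> {x<..}" and ?R2 = "{x<..} \<times> {..h}"
  have sets: "?U \<in> sets (D \<Otimes>\<^sub>M D)" "?R1 \<in> sets (D \<Otimes>\<^sub>M D)" "?R2 \<in> sets (D \<Otimes>\<^sub>M D)"
    using both_exceed_in_sets[OF D.real_distribution_axioms D.real_distribution_axioms]
    by (auto intro!: pair_measureI)
  have "measure (D \<Otimes>\<^sub>M D) ?R1 = (1 - tail D h) * tail D x"
    and "measure (D \<Otimes>\<^sub>M D) ?R2 = tail D x * (1 - tail D h)"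
    by (simp_all add: measure_pair_Times D.prob_space_axioms D.measure_atMost_eq tail_def)
  moreover have "measure (D \<Otimes>\<^sub>M D) ?U + measure (D \<Otimes>\<^sub>M D) ?R1 + measure (D \<Otimes>\<^sub>M D) ?R2
      = measure (D \<Otimes>\<^sub>M D) (?U \<union> ?R1 \<union> ?R2)"
    using sets hx by (subst DD.finite_measure_Union; auto simp: both_exceed_def)+
  moreover have "\<dots> \<le> tail (D \<star> D) x"
    using sets hx by (intro measure_le_tail_convolution[OF D D]) (auto simp: both_exceed_def)
  ultimately show ?thesis
    by (simp add: algebra_simps)
qed

lemma tail_convolution_self_ge:
  assumes D: "nonneg_distribution D" and y: "0 \<le> y" "y \<le> x"
  shows "tail D x + (1 - tail D y) * tail D x + (tail D y - tail D x) * tail D (x - y) \<le> tail (D \<star> D) x"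
proof -
  interpret D: nonneg_distribution D by fact
  interpret DD: prob_space "D \<Otimes>\<^sub>M D"
    by (rule prob_space_pair) unfold_locales
  let ?R0 = "{x<..} \<times> UNIV" and ?R1 = "{..y} \<times> {x<..}" and ?R2 = "{y<..x} \<times> {x - y<..}"
  have sets: "?R0 \<in> sets (D \<Otimes>\<^sub>M D)" "?R1 \<in> sets (D \<Otimes>\<^sub>M D)" "?R2 \<in> sets (D \<Otimes>\<^sub>M D)"
    by (auto intro!: pair_measureI)
  have "measure (D \<Otimes>\<^sub>M D) ?R0 = tail D x"
    and "measure (D \<Otimes>\<^sub>M D) ?R1 = (1 - tail D y) * tail D x"
    and "measure (D \<Otimes>\<^sub>M D) ?R2 = (tail D y - tail D x) * tail D (x - y)"
    using y by (simp_all add: measure_pair_Times D.prob_space_axioms D.measure_atMost_eq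
        D.measure_Ioc_eq_tail_diff tail_def)
  moreover have "measure (D \<Otimes>\<^sub>M D) ?R0 + measure (D \<Otimes>\<^sub>M D) ?R1 + measure (D \<Otimes>\<^sub>M D) ?R2
      = measure (D \<Otimes>\<^sub>M D) (?R0 \<union> ?R1 \<union> ?R2)"
    using sets y by (subst DD.finite_measure_Union; auto)+
  moreover have "\<dots> \<le> tail (D \<star> D) x"
    using sets y by (intro measure_le_tail_convolution[OF D D]) auto
  ultimately show ?thesis
    by simp
qed

lemma nonneg_distribution_convolution:
  assumes X: "nonneg_distribution X" and Y: "nonneg_distribution Y"
  shows "nonneg_distribution (X \<star> Y)"
proof -
  interpret X: nonneg_distribution X by fact
  interpret Y: nonneg_distribution Y by fact
  interpret XY: real_distribution "X \<star> Y"
    by (rule real_distribution_convolution) unfold_locales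
  have "AE z in X \<star> Y. 0 \<le> z"
    unfolding convolution_def
    by (subst AE_distr_iff) (use AE_pair_nonneg[OF X Y] in \<open>auto elim!: AE_mp\<close>)
  then show ?thesis
    by unfold_locales
qed

lemma convolution_return_0:
  assumes "real_distribution M"
  shows "M \<star> return borel 0 = M"
proof -
  interpret real_distribution M by fact
  show ?thesis
  proof (rule measure_eqI)
    fix A assume "A \<in> sets (M \<star> return borel 0)"
    then have A: "A \<in> sets borel" by simp
    have "emeasure (M \<star> return borel 0) A = (\<integral>\<^sup>+x. \<integral>\<^sup>+y. indicator A (x + y) \<partial>return borel 0 \<partial>M)"
      using A by (intro convolution_emeasure') (auto intro!: prob_space.finite_measure prob_space_return)
    also have "\<dots> = emeasure M A"
      using A by (simp add: nn_integral_return)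
    finally show "emeasure (M \<star> return borel 0) A = emeasure M A" .
  qed simp
qed

lemma nonneg_distribution_conv_pow:
  assumes "nonneg_distribution B" shows "nonneg_distribution (conv_pow B (Suc n))"
proof (induction n)
  case 0
  then show ?case
    using assms by (simp add: convolution_return_0 nonneg_distribution.axioms(1))
next
  case (Suc n)
  then show ?case
    using nonneg_distribution_convolution[OF assms] by simp
qed

section \<open>Subexponential distributions and tail equivalence\<close>

definition classS2 :: "real measure \<Rightarrow> bool" where
  "classS2 B \<longleftrightarrow> inf_right_endpoint B \<and> ((\<lambda>x. tail (B \<star> B) x / tail B x) \<longlongrightarrow> 2) at_top"

lemma classS_imp_classS2:
  assumes B: "real_distribution B" and S: "classS B"
  shows "classS2 B"
proof -
  have "(2::nat) \<ge> 2" by simp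
  then have "((\<lambda>x. tail (conv_pow B 2) x / (real 2 * tail B x)) \<longlongrightarrow> 1) at_top"
    using S unfolding classS_def by blast
  then have "((\<lambda>x. 2 * (tail (B \<star> B) x / (2 * tail B x))) \<longlongrightarrow> 2 * 1) at_top"
    by (intro tendsto_mult_left) (simp add: numeral_2_eq_2 convolution_return_0[OF B])
  then show ?thesis
    using S by (simp add: classS2_def classS_def)
qed

lemma classS2_imp_classL:
  assumes D: "nonneg_distribution D" and S: "classS2 D"
  shows "classL D"
proof -
  interpret D: nonneg_distribution D by fact
  have pos: "0 < tail D x" for x
    using S by (simp add: classS2_def inf_right_endpoint_def)
  have ratio: "((\<lambda>x. tail (D \<star> D) x / tail D x) \<longlongrightarrow> 2) at_top"
    using S by (simp add: classS2_def)
  have "((\<lambda>x. tail D (x - y) / tail D x) \<longlongrightarrow> 1) at_top" if y: "0 < y" for y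
  proof (rule tendsto_sandwich)
    let ?u = "\<lambda>x. (tail (D \<star> D) x / tail D x - 2 + tail D y) / (tail D y - tail D x)"
    show "\<forall>\<^sub>F x in at_top. 1 \<le> tail D (x - y) / tail D x"
      using pos D.tail_antimono[of "x - y" x for x] y by (auto simp: field_simps)
    have "((\<lambda>x. tail D y - tail D x) \<longlongrightarrow> tail D y - 0) at_top"
      by (intro tendsto_diff tendsto_const D.tendsto_tail_at_top)
    then have "\<forall>\<^sub>F x in at_top. 0 < tail D y - tail D x"
      using pos[of y] by (auto dest: order_tendstoD)
    then show "\<forall>\<^sub>F x in at_top. tail D (x - y) / tail D x \<le> ?u x"
      using eventually_ge_at_top[of y]
    proof eventually_elim
      case (elim x)
      have "(tail D y - tail D x) * tail D (x - y) \<le> tail (D \<star> D) x - 2 * tail D x + tail D y * tail D x"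
        using tail_convolution_self_ge[OF D, of y x] y elim by (simp add: algebra_simps)
      then have "(tail D y - tail D x) * tail D (x - y) / tail D x
          \<le> (tail (D \<star> D) x - 2 * tail D x + tail D y * tail D x) / tail D x"
        using pos[of x] by (intro divide_right_mono) auto
      then have "(tail D y - tail D x) * (tail D (x - y) / tail D x) \<le> tail (D \<star> D) x / tail D x - 2 + tail D y"
        using pos[of x] by (simp add: add_divide_distrib diff_divide_distrib)
      then show ?case
        using elim(1) by (simp add: pos_le_divide_eq mult.commute)
    qed
    have "(?u \<longlongrightarrow> (2 - 2 + tail D y) / (tail D y - 0)) at_top"
      using pos[of y] by (intro tendsto_intros ratio D.tendsto_tail_at_top) auto
    then show "(?u \<longlongrightarrow> 1) at_top"
      using pos[of y] by simp
  qed simp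
  then show ?thesis
    using S by (simp add: classL_def classS2_def)
qed

lemma classL_eventually_shift_le:
  assumes L: "classL B" and h: "0 < h" and c: "1 < c"
  shows "\<forall>\<^sub>F x in at_top. tail B (x - h) \<le> c * tail B x"
proof -
  have "\<forall>\<^sub>F x in at_top. tail B (x - h) / tail B x < c"
    using L h c by (intro order_tendstoD(2)) (auto simp: classL_def)
  then show ?thesis
    by eventually_elim (use L in \<open>auto simp: classL_def inf_right_endpoint_def divide_less_eq less_imp_le\<close>)
qed

lemma tail_convolution_le_dominated:
  assumes X: "real_distribution X" and Y: "real_distribution Y" and D: "nonneg_distribution D"
    and c: "0 \<le> c" and hx: "h \<le> x"
    and XD: "\<And>t. h \<le> t \<Longrightarrow> tail X t \<le> c * tail D t"
    and YD: "\<And>t. h \<le> t \<Longrightarrow> tail Y t \<le> c * tail D t"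
  shows "tail (X \<star> Y) x
    \<le> tail X (x - h) + tail Y (x - h) + c\<^sup>2 * (tail (D \<star> D) x - 2 * (1 - tail D h) * tail D x)"
proof -
  have "tail (X \<star> Y) x \<le> tail X (x - h) + tail Y (x - h) + measure (X \<Otimes>\<^sub>M Y) (both_exceed h x)"
    by (rule tail_convolution_le_both_exceed[OF X Y])
  also have "measure (X \<Otimes>\<^sub>M Y) (both_exceed h x) \<le> c\<^sup>2 * measure (D \<Otimes>\<^sub>M D) (both_exceed h x)"
    using D by (intro measure_both_exceed_le[OF X Y _ c XD YD]) (rule nonneg_distribution.axioms(1))
  also have "\<dots> \<le> c\<^sup>2 * (tail (D \<star> D) x - 2 * (1 - tail D h) * tail D x)"
    by (intro mult_left_mono measure_both_exceed_le_tail_convolution[OF D hx]) simp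
  finally show ?thesis
    by simp
qed

text \<open>By subexponentiality of \<open>D\<close>, the dominating term of \<open>tail_convolution_le_dominated\<close>
  is \<open>2 c\<^sup>2 tail D h tail D x + o(tail D x)\<close>, and \<open>tail D h\<close> is small for large \<open>h\<close>.\<close>

lemma tail_convolution_le_shifted:
  assumes X: "nonneg_distribution X" and Y: "nonneg_distribution Y"
    and D: "nonneg_distribution D" and S: "classS2 D" and c: "0 \<le> c"
    and XD: "\<forall>\<^sub>F t in at_top. tail X t \<le> c * tail D t"
    and YD: "\<forall>\<^sub>F t in at_top. tail Y t \<le> c * tail D t"
    and e: "0 < e"
  obtains h where "0 < h"
    "\<forall>\<^sub>F x in at_top. tail (X \<star> Y) x \<le> tail X (x - h) + tail Y (x - h) + e * tail D x"
proof -
  interpret D: nonneg_distribution D by fact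
  have pos: "0 < tail D x" for x
    using S by (simp add: classS2_def inf_right_endpoint_def)
  obtain h0 where h0: "\<And>t. h0 \<le> t \<Longrightarrow> tail X t \<le> c * tail D t \<and> tail Y t \<le> c * tail D t"
    using eventually_conj[OF XD YD] by (auto simp: eventually_at_top_linorder)
  have "((\<lambda>t. c\<^sup>2 * (2 * tail D t)) \<longlongrightarrow> c\<^sup>2 * (2 * 0)) at_top"
    by (intro tendsto_intros D.tendsto_tail_at_top)
  then have "\<forall>\<^sub>F t in at_top. c\<^sup>2 * (2 * tail D t) < e / 2"
    using e by (intro order_tendstoD(2)) auto
  then obtain h1 where h1: "\<And>t. h1 \<le> t \<Longrightarrow> c\<^sup>2 * (2 * tail D t) < e / 2"
    by (auto simp: eventually_at_top_linorder)
  define h where "h = max (max h0 h1) 1"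
  have h: "h0 \<le> h" "h1 \<le> h" "1 \<le> h"
    by (auto simp: h_def)
  have "((\<lambda>x. c\<^sup>2 * (tail (D \<star> D) x / tail D x - 2)) \<longlongrightarrow> c\<^sup>2 * (2 - 2)) at_top"
    using S by (intro tendsto_intros) (simp add: classS2_def)
  then have "\<forall>\<^sub>F x in at_top. c\<^sup>2 * (tail (D \<star> D) x / tail D x - 2) < e / 2"
    using e by (intro order_tendstoD(2)) auto
  then have "\<forall>\<^sub>F x in at_top. tail (X \<star> Y) x \<le> tail X (x - h) + tail Y (x - h) + e * tail D x"
    using eventually_ge_at_top[of h]
  proof eventually_elim
    case (elim x)
    have "tail (X \<star> Y) x
        \<le> tail X (x - h) + tail Y (x - h) + c\<^sup>2 * (tail (D \<star> D) x - 2 * (1 - tail D h) * tail D x)"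
      using X Y D c elim(2) h0 h(1)
      by (intro tail_convolution_le_dominated) (auto intro: nonneg_distribution.axioms(1))
    also have "c\<^sup>2 * (tail (D \<star> D) x - 2 * (1 - tail D h) * tail D x)
        = tail D x * (c\<^sup>2 * (tail (D \<star> D) x / tail D x - 2) + c\<^sup>2 * (2 * tail D h))"
      using pos[of x] by (simp add: field_simps)
    also have "\<dots> \<le> tail D x * (e / 2 + e / 2)"
      using pos[of x] elim(1) h1[OF h(2)] by (intro mult_left_mono add_mono) auto
    finally show ?case
      by (simp add: mult.commute)
  qed
  then show thesis
    by (rule that[rotated]) (use h(3) in simp)
qed

lemma eventually_tail_le_if_ratio_tendsto:
  assumes "((\<lambda>x. tail X x / tail D x) \<longlongrightarrow> \<gamma>) at_top" "\<gamma> < c" "\<And>x. 0 < tail D x"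
  shows "\<forall>\<^sub>F t in at_top. tail X t \<le> c * tail D t"
  using order_tendstoD(2)[OF assms(1,2)]
  by eventually_elim (use assms(3) in \<open>auto simp: divide_less_eq less_imp_le\<close>)

lemma tendsto_shifted_tail_ratio:
  assumes XD: "((\<lambda>x. tail X x / tail D x) \<longlongrightarrow> \<alpha>) at_top" and L: "classL D" and h: "0 < h"
  shows "((\<lambda>x. tail X (x - h) / tail D x) \<longlongrightarrow> \<alpha>) at_top"
proof -
  have "filterlim (\<lambda>x. x - h) at_top at_top"
    by (rule filterlim_tendsto_add_at_top[OF tendsto_const filterlim_ident, of "-h", simplified])
  then have "((\<lambda>x. tail X (x - h) / tail D (x - h) * (tail D (x - h) / tail D x)) \<longlongrightarrow> \<alpha> * 1) at_top"
    using L h by (intro tendsto_mult filterlim_compose[OF XD]) (auto simp: classL_def)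
  moreover have "(\<lambda>x. tail X (x - h) / tail D (x - h) * (tail D (x - h) / tail D x))
      = (\<lambda>x. tail X (x - h) / tail D x)"
    using L by (intro ext) (simp add: classL_def inf_right_endpoint_def less_imp_neq[symmetric])
  ultimately show ?thesis
    by (simp only: mult_1_right)
qed

lemma tail_convolution_ratio_eventually_gt:
  assumes X: "nonneg_distribution X" and Y: "nonneg_distribution Y" and D: "\<And>x. 0 < tail D x"
    and XD: "((\<lambda>x. tail X x / tail D x) \<longlongrightarrow> \<alpha>) at_top"
    and YD: "((\<lambda>x. tail Y x / tail D x) \<longlongrightarrow> \<beta>) at_top"
    and a: "a < \<alpha> + \<beta>"
  shows "\<forall>\<^sub>F x in at_top. a < tail (X \<star> Y) x / tail D x"
proof -
  interpret Y: nonneg_distribution Y by fact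
  have "((\<lambda>x. tail X x / tail D x + tail Y x / tail D x - tail X x / tail D x * tail Y x)
      \<longlongrightarrow> \<alpha> + \<beta> - \<alpha> * 0) at_top"
    by (intro tendsto_intros XD YD Y.tendsto_tail_at_top)
  with a have "\<forall>\<^sub>F x in at_top. a < (tail X x + tail Y x - tail X x * tail Y x) / tail D x"
    by (auto simp: add_divide_distrib diff_divide_distrib dest: order_tendstoD)
  then show ?thesis
  proof eventually_elim
    case (elim x)
    have "(tail X x + tail Y x - tail X x * tail Y x) / tail D x \<le> tail (X \<star> Y) x / tail D x"
      using D[of x] tail_convolution_ge[OF X Y] by (intro divide_right_mono) auto
    then show ?case
      using elim by linarith
  qed
qed

lemma tail_convolution_ratio_eventually_lt:
  assumes X: "nonneg_distribution X" and Y: "nonneg_distribution Y"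
    and D: "nonneg_distribution D" and S: "classS2 D"
    and XD: "((\<lambda>x. tail X x / tail D x) \<longlongrightarrow> \<alpha>) at_top"
    and YD: "((\<lambda>x. tail Y x / tail D x) \<longlongrightarrow> \<beta>) at_top"
    and b: "\<alpha> + \<beta> < b"
  shows "\<forall>\<^sub>F x in at_top. tail (X \<star> Y) x / tail D x < b"
proof -
  have pos: "0 < tail D x" for x
    using S by (simp add: classS2_def inf_right_endpoint_def)
  have "0 \<le> \<alpha>"
    by (rule tendsto_lowerbound[OF XD]) (auto simp: tail_nonneg pos less_imp_le)
  then obtain h where h: "0 < h"
    and le: "\<forall>\<^sub>F x in at_top. tail (X \<star> Y) x \<le> tail X (x - h) + tail Y (x - h) + (b - (\<alpha> + \<beta>)) / 2 * tail D x"
    using tail_convolution_le_shifted[OF X Y D S, where c = "max \<alpha> \<beta> + 1" and e = "(b - (\<alpha> + \<beta>)) / 2"] b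
      eventually_tail_le_if_ratio_tendsto[OF XD _ pos] eventually_tail_le_if_ratio_tendsto[OF YD _ pos]
    by auto
  let ?w = "\<lambda>x. tail X (x - h) / tail D x + tail Y (x - h) / tail D x + (b - (\<alpha> + \<beta>)) / 2"
  have "(?w \<longlongrightarrow> \<alpha> + \<beta> + (b - (\<alpha> + \<beta>)) / 2) at_top"
    using classS2_imp_classL[OF D S] h by (intro tendsto_intros tendsto_shifted_tail_ratio XD YD)
  then have "\<forall>\<^sub>F x in at_top. ?w x < b"
    by (rule order_tendstoD(2)) (use b in \<open>simp add: field_simps\<close>)
  with le show ?thesis
  proof eventually_elim
    case (elim x)
    have "tail (X \<star> Y) x / tail D x
        \<le> (tail X (x - h) + tail Y (x - h) + (b - (\<alpha> + \<beta>)) / 2 * tail D x) / tail D x"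
      using elim(1) pos[of x] by (intro divide_right_mono) auto
    also have "\<dots> = ?w x"
      using pos[of x] by (simp add: field_simps)
    finally show ?case
      using elim(2) by simp
  qed
qed

lemma tendsto_tail_convolution_ratio_add:
  assumes "nonneg_distribution X" "nonneg_distribution Y" "nonneg_distribution D" "classS2 D"
    and "((\<lambda>x. tail X x / tail D x) \<longlongrightarrow> \<alpha>) at_top"
    and "((\<lambda>x. tail Y x / tail D x) \<longlongrightarrow> \<beta>) at_top"
  shows "((\<lambda>x. tail (X \<star> Y) x / tail D x) \<longlongrightarrow> \<alpha> + \<beta>) at_top"
proof (rule order_tendstoI)
  show "\<forall>\<^sub>F x in at_top. a < tail (X \<star> Y) x / tail D x" if "a < \<alpha> + \<beta>" for a
    using assms that
    by (intro tail_convolution_ratio_eventually_gt) (auto simp: classS2_def inf_right_endpoint_def)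
  show "\<forall>\<^sub>F x in at_top. tail (X \<star> Y) x / tail D x < b" if "\<alpha> + \<beta> < b" for b
    using assms that by (rule tail_convolution_ratio_eventually_lt)
qed

lemma classS_if_asymp_equiv:
  assumes E: "nonneg_distribution E" and D: "nonneg_distribution D"
    and E_pos: "inf_right_endpoint E" and S: "classS2 D" and ED: "tail E \<sim>[at_top] tail D"
  shows "classS E"
proof -
  have pos: "0 < tail E x" "0 < tail D x" for x
    using E_pos S by (simp_all add: classS2_def inf_right_endpoint_def)
  have "\<forall>\<^sub>F x in at_top. tail E x \<noteq> 0 \<or> tail D x \<noteq> 0"
    using pos(1) by (intro always_eventually) (metis less_irrefl)
  then have ratio: "((\<lambda>x. tail E x / tail D x) \<longlongrightarrow> 1) at_top"
    by (rule asymp_equivD_strong[OF ED])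
  have pow: "((\<lambda>x. tail (conv_pow E (Suc n)) x / tail D x) \<longlongrightarrow> real (Suc n)) at_top" for n
  proof (induction n)
    case 0
    then show ?case
      using ratio E by (simp add: convolution_return_0 nonneg_distribution.axioms(1))
  next
    case (Suc n)
    have "((\<lambda>x. tail (E \<star> conv_pow E (Suc n)) x / tail D x) \<longlongrightarrow> 1 + real (Suc n)) at_top"
      by (rule tendsto_tail_convolution_ratio_add[OF E nonneg_distribution_conv_pow[OF E] D S ratio Suc])
    then show ?case
      by simp
  qed
  have "((\<lambda>x. tail (conv_pow E n) x / (real n * tail E x)) \<longlongrightarrow> 1) at_top" if n: "n \<ge> 2" for n
  proof -
    obtain m where m: "n = Suc m"
      using n by (cases n) auto
    have "((\<lambda>x. (tail (conv_pow E n) x / tail D x) / (real n * (tail E x / tail D x)))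
        \<longlongrightarrow> real n / (real n * 1)) at_top"
      unfolding m by (intro tendsto_intros pow ratio) auto
    moreover have "real n / (real n * 1) = 1"
      using n by simp
    moreover have "(\<lambda>x. (tail (conv_pow E n) x / tail D x) / (real n * (tail E x / tail D x)))
        = (\<lambda>x. tail (conv_pow E n) x / (real n * tail E x))"
      using pos by (intro ext) (simp add: field_simps less_imp_neq[symmetric])
    ultimately show ?thesis
      by (simp only:)
  qed
  then show ?thesis
    using E_pos by (simp add: classS_def)
qed

lemma Limsup_eq_if_asymp_equiv:
  fixes f g :: "'a \<Rightarrow> real"
  assumes fg: "f \<sim>[F] g" and F: "F \<noteq> bot"
    and f: "\<forall>\<^sub>F x in F. 0 \<le> f x" and g: "\<forall>\<^sub>F x in F. 0 \<le> g x"
  shows "Limsup F (\<lambda>x. ereal (f x)) = Limsup F (\<lambda>x. ereal (g x))"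
proof -
  have le: "Limsup F (\<lambda>x. ereal (f x)) \<le> Limsup F (\<lambda>x. ereal (g x))"
    if fg: "f \<sim>[F] g" and f: "\<forall>\<^sub>F x in F. 0 \<le> f x" and g: "\<forall>\<^sub>F x in F. 0 \<le> g x"
    for f g :: "'a \<Rightarrow> real"
  proof (rule ereal_le_mult_one_interval)
    have "0 \<le> Limsup F (\<lambda>x. ereal (g x))"
      using g by (intro le_Limsup[OF F]) auto
    then show "Limsup F (\<lambda>x. ereal (g x)) \<noteq> -\<infinity>"
      by auto
    fix z :: ereal assume z: "0 < z" "z < 1"
    then obtain r where r: "z = ereal r" "0 < r" "r < 1"
      by (cases z) auto
    have "\<forall>\<^sub>F x in F. r * f x \<le> g x"
      using asymp_equiv_imp_eventually_ge[OF asymp_equiv_symI[OF fg] r(3)] f g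
      by eventually_elim auto
    then have "Limsup F (\<lambda>x. ereal r * ereal (f x)) \<le> Limsup F (\<lambda>x. ereal (g x))"
      by (intro Limsup_mono) auto
    then show "z * Limsup F (\<lambda>x. ereal (f x)) \<le> Limsup F (\<lambda>x. ereal (g x))"
      using r Limsup_ereal_mult_left[OF F, of r "\<lambda>x. ereal (f x)"] by simp
  qed
  show ?thesis
    using le[OF fg f g] le[OF asymp_equiv_symI[OF fg] g f] by simp
qed

lemma Bstar_eq_if_asymp_equiv:
  assumes ED: "tail E \<sim>[at_top] tail D" and v: "0 < v"
  shows "Bstar E v = Bstar D v"
proof -
  have "filterlim (\<lambda>x. v * x) at_top at_top"
    using v by (intro filterlim_tendsto_pos_mult_at_top[OF tendsto_const _ filterlim_ident])
  then have "(\<lambda>x. tail E (v * x) / tail E x) \<sim>[at_top] (\<lambda>x. tail D (v * x) / tail D x)"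
    by (intro asymp_equiv_divide asymp_equiv_compose'[OF ED] ED)
  then show ?thesis
    unfolding Bstar_def by (intro Limsup_eq_if_asymp_equiv) (auto simp: tail_nonneg)
qed

lemma Kminus_eq_if_asymp_equiv:
  assumes "tail E \<sim>[at_top] tail D"
  shows "Kminus E = Kminus D"
  unfolding Kminus_def
proof (rule Lim_cong)
  show "\<forall>\<^sub>F v in at_right 1.
      (if Bstar E v = 0 then \<infinity> else ereal (- ln (real_of_ereal (Bstar E v)) / ln v)) =
      (if Bstar D v = 0 then \<infinity> else ereal (- ln (real_of_ereal (Bstar D v)) / ln v))"
    using eventually_at_right_less[of 1] by eventually_elim (simp add: Bstar_eq_if_asymp_equiv[OF assms])
qed simp

lemma classAstar_iff_if_asymp_equiv:
  assumes E: "nonneg_distribution E" and D: "nonneg_distribution D"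
    and E_pos: "inf_right_endpoint E" and D_pos: "inf_right_endpoint D"
    and ED: "tail E \<sim>[at_top] tail D"
  shows "classAstar E \<longleftrightarrow> classAstar D"
proof -
  have "classS E \<longleftrightarrow> classS D"
  proof
    assume "classS E"
    then have "classS2 E"
      using E by (intro classS_imp_classS2) (auto intro: nonneg_distribution.axioms(1))
    then show "classS D"
      by (rule classS_if_asymp_equiv[OF D E D_pos _ asymp_equiv_symI[OF ED]])
  next
    assume "classS D"
    then have "classS2 D"
      using D by (intro classS_imp_classS2) (auto intro: nonneg_distribution.axioms(1))
    then show "classS E"
      by (rule classS_if_asymp_equiv[OF E D E_pos _ ED])
  qed
  then show ?thesis
    by (simp add: classAstar_def Kminus_eq_if_asymp_equiv[OF ED])
qed

lemma asymp_equiv_sum_if_sandwiched: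
  fixes a b T :: "'a \<Rightarrow> real"
  assumes a: "\<And>x. 0 < a x" and b: "\<And>x. 0 \<le> b x" "(b \<longlongrightarrow> 0) F"
    and lower: "\<And>x. a x + b x - a x * b x \<le> T x"
    and upper: "\<And>c. 1 < c \<Longrightarrow> \<forall>\<^sub>F x in F. T x \<le> c * (a x + b x)"
  shows "T \<sim>[F] (\<lambda>x. a x + b x)"
proof (intro asymp_equivI' order_tendstoI)
  have pos: "0 < a x + b x" for x
    using a b by (simp add: add_pos_nonneg)
  fix c :: real assume "c < 1"
  then have "\<forall>\<^sub>F x in F. c < 1 - b x"
    using b by (intro order_tendstoD(1)) (auto intro!: tendsto_eq_intros)
  then show "\<forall>\<^sub>F x in F. c < T x / (a x + b x)"
  proof eventually_elim
    case (elim x)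
    have "(a x + b x) * (1 - b x) = a x + b x - a x * b x - b x * b x"
      by (simp add: algebra_simps)
    then have "(a x + b x) * (1 - b x) \<le> T x"
      using lower[of x] zero_le_square[of "b x"] by linarith
    then have "1 - b x \<le> T x / (a x + b x)"
      using pos[of x] by (simp add: pos_le_divide_eq mult.commute)
    then show ?case
      using elim by simp
  qed
next
  have pos: "0 < a x + b x" for x
    using a b by (simp add: add_pos_nonneg)
  fix c :: real assume "1 < c"
  then have "\<forall>\<^sub>F x in F. T x \<le> (1 + c) / 2 * (a x + b x)"
    by (intro upper) simp
  then show "\<forall>\<^sub>F x in F. T x / (a x + b x) < c"
  proof eventually_elim
    case (elim x)
    have "(1 + c) / 2 * (a x + b x) < c * (a x + b x)"
      using pos[of x] \<open>1 < c\<close> by (intro mult_strict_right_mono) auto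
    then have "T x < c * (a x + b x)"
      using elim by linarith
    then show ?case
      using pos[of x] by (simp add: pos_divide_less_eq)
  qed
qed

lemma tail_convolution_eventually_le_sum:
  assumes H1: "nonneg_distribution H1" and H2: "nonneg_distribution H2"
    and K: "nonneg_distribution K" and L1: "classL H1" and L2: "classL H2" and S: "classS2 K"
    and H1K: "\<And>t. tail H1 t \<le> tail K t" and H2K: "\<And>t. tail H2 t \<le> tail K t"
    and KG: "\<And>t. tail K t \<le> tail (H1 \<star> H2) t"
    and c: "1 < c"
  shows "\<forall>\<^sub>F x in at_top. tail (H1 \<star> H2) x \<le> c * (tail H1 x + tail H2 x)"
proof -
  define e where "e = (c - 1) / (c + 1)"
  have e: "0 < e" "e < 1" "1 + e = c * (1 - e)"
    using c by (auto simp: e_def field_simps)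
  obtain h where h: "0 < h"
    and shifted: "\<forall>\<^sub>F x in at_top. tail (H1 \<star> H2) x \<le> tail H1 (x - h) + tail H2 (x - h) + e * tail K x"
    using tail_convolution_le_shifted[OF H1 H2 K S _ _ _ e(1), of 1] H1K H2K by auto
  have "1 < 1 + e"
    using e by simp
  from shifted classL_eventually_shift_le[OF L1 h this] classL_eventually_shift_le[OF L2 h this]
  show ?thesis
  proof eventually_elim
    case (elim x)
    have "e * tail K x \<le> e * tail (H1 \<star> H2) x"
      using KG e by (intro mult_left_mono) auto
    then have "(1 - e) * tail (H1 \<star> H2) x \<le> c * (1 - e) * (tail H1 x + tail H2 x)"
      using elim e(3) by (simp add: algebra_simps)
    then show ?case
      using e by (simp add: mult.commute[of c] mult.assoc mult_le_cancel_left_pos)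
  qed
qed

lemma tail_convolution_asymp_equiv_sum:
  assumes H1: "nonneg_distribution H1" and H2: "nonneg_distribution H2"
    and K: "nonneg_distribution K" and L1: "classL H1" and L2: "classL H2" and S: "classS2 K"
    and "\<And>t. tail H1 t \<le> tail K t" "\<And>t. tail H2 t \<le> tail K t" "\<And>t. tail K t \<le> tail (H1 \<star> H2) t"
  shows "tail (H1 \<star> H2) \<sim>[at_top] (\<lambda>x. tail H1 x + tail H2 x)"
proof (rule asymp_equiv_sum_if_sandwiched)
  show "0 < tail H1 x" for x
    using L1 by (simp add: classL_def inf_right_endpoint_def)
  show "(tail H2 \<longlongrightarrow> 0) at_top"
    using H2 by (intro real_distribution.tendsto_tail_at_top nonneg_distribution.axioms(1))
qed (use assms in \<open>auto intro: tail_nonneg tail_convolution_ge tail_convolution_eventually_le_sum\<close>)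

lemma tail_asymp_equiv_sum_if_between:
  assumes H1: "nonneg_distribution H1" and H2: "nonneg_distribution H2" and L1: "classL H1"
    and lower: "\<And>t. tail H1 t + tail H2 t - tail H1 t * tail H2 t \<le> tail F t"
    and upper: "\<And>t. tail F t \<le> tail (H1 \<star> H2) t"
    and G: "tail (H1 \<star> H2) \<sim>[at_top] (\<lambda>x. tail H1 x + tail H2 x)"
  shows "tail F \<sim>[at_top] (\<lambda>x. tail H1 x + tail H2 x)"
proof (rule asymp_equiv_sum_if_sandwiched[OF _ tail_nonneg _ lower])
  show "0 < tail H1 x" for x
    using L1 by (simp add: classL_def inf_right_endpoint_def)
  show "(tail H2 \<longlongrightarrow> 0) at_top"
    using H2 by (intro real_distribution.tendsto_tail_at_top nonneg_distribution.axioms(1))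
  fix c :: real assume "1 < c"
  from asymp_equiv_imp_eventually_le[OF G this]
  show "\<forall>\<^sub>F x in at_top. tail F x \<le> c * (tail H1 x + tail H2 x)"
    by eventually_elim (use upper in \<open>auto simp: tail_nonneg intro: order_trans\<close>)
qed

lemma classAstar_iff_if_tail_sandwich:
  assumes H1: "nonneg_distribution H1" and H2: "nonneg_distribution H2"
    and F: "nonneg_distribution F" and L1: "classL H1" and L2: "classL H2"
    and lower: "\<And>t. tail H1 t + tail H2 t - tail H1 t * tail H2 t \<le> tail F t"
    and upper: "\<And>t. tail F t \<le> tail (H1 \<star> H2) t"
  shows "classAstar F \<longleftrightarrow> classAstar (H1 \<star> H2)"
proof -
  interpret H1: nonneg_distribution H1 by fact
  interpret H2: nonneg_distribution H2 by fact
  let ?G = "H1 \<star> H2" and ?sum = "\<lambda>x. tail H1 x + tail H2 x"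
  have G: "nonneg_distribution ?G"
    by (rule nonneg_distribution_convolution[OF H1 H2])
  have H_le_F: "tail H1 t \<le> tail F t" "tail H2 t \<le> tail F t" for t
  proof -
    have "tail H1 t * tail H2 t \<le> tail H1 t" "tail H1 t * tail H2 t \<le> tail H2 t"
      by (simp_all add: mult_left_le mult_left_le_one_le H1.tail_le_1 H2.tail_le_1 tail_nonneg)
    then show "tail H1 t \<le> tail F t" "tail H2 t \<le> tail F t"
      using lower[of t] by linarith+
  qed
  have "tail F \<sim>[at_top] tail ?G" if "classAstar F \<or> classAstar ?G"
  proof -
    from that have "tail ?G \<sim>[at_top] ?sum"
    proof
      assume "classAstar F"
      then have "classS2 F"
        using F by (intro classS_imp_classS2) (auto simp: classAstar_def intro: nonneg_distribution.axioms(1))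
      then show ?thesis
        by (rule tail_convolution_asymp_equiv_sum[OF H1 H2 F L1 L2 _ H_le_F upper])
    next
      assume "classAstar ?G"
      then have "classS2 ?G"
        using G by (intro classS_imp_classS2) (auto simp: classAstar_def intro: nonneg_distribution.axioms(1))
      then show ?thesis
        by (rule tail_convolution_asymp_equiv_sum[OF H1 H2 G L1 L2 _
              order_trans[OF H_le_F(1) upper] order_trans[OF H_le_F(2) upper] order_refl])
    qed
    then show ?thesis
      using tail_asymp_equiv_sum_if_between[OF H1 H2 L1 lower upper]
      by (metis asymp_equiv_symI asymp_equiv_trans)
  qed
  moreover have "inf_right_endpoint F" "inf_right_endpoint ?G"
    using L1 H_le_F(1) upper unfolding classL_def inf_right_endpoint_def
    by (meson less_le_trans)+
  ultimately show ?thesis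
    using classAstar_iff_if_asymp_equiv[OF F G] by blast
qed

section \<open>The radial variable\<close>

lemma classR_norm_ge:
  assumes "classR A" shows "\<exists>r>0. \<forall>a\<in>A. r \<le> norm a"
proof -
  have "0 \<notin> closure A"
    using assms by (simp add: classR_def)
  then obtain e where "0 < e" "\<forall>a\<in>A. \<not> dist a 0 < e"
    unfolding closure_approachable by auto
  then show ?thesis
    by (intro exI[of _ e]) (auto simp: not_less)
qed

lemma mem_scaleR_image_iff:
  fixes z :: "'a::real_vector"
  assumes "0 < u" shows "z \<in> (\<lambda>a. u *\<^sub>R a) ` A \<longleftrightarrow> (1 / u) *\<^sub>R z \<in> A"
proof
  assume "z \<in> (\<lambda>a. u *\<^sub>R a) ` A"
  then show "(1 / u) *\<^sub>R z \<in> A"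
    using assms by auto
next
  assume "(1 / u) *\<^sub>R z \<in> A"
  moreover have "z = u *\<^sub>R ((1 / u) *\<^sub>R z)"
    using assms by simp
  ultimately show "z \<in> (\<lambda>a. u *\<^sub>R a) ` A"
    by blast
qed

lemma bdd_above_ZA_set:
  fixes A :: "(real ^ 'd) set"
  assumes "classR A" shows "bdd_above ({u. u > 0 \<and> z \<in> (\<lambda>a. u *\<^sub>R a) ` A} \<union> {0})"
proof -
  obtain r where r: "r > 0" "\<forall>a\<in>A. r \<le> norm a"
    using classR_norm_ge[OF assms] by blast
  show ?thesis
  proof (rule bdd_aboveI[of _ "norm z / r"])
    fix u assume "u \<in> {u. u > 0 \<and> z \<in> (\<lambda>a. u *\<^sub>R a) ` A} \<union> {0}"
    then consider "u = 0" | a where "u > 0" "a \<in> A" "z = u *\<^sub>R a"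
      by auto
    then show "u \<le> norm z / r"
    proof cases
      case 1
      then show ?thesis using r by simp
    next
      case 2
      then have "u * r \<le> norm z"
        using r by (simp add: mult_left_mono)
      then show ?thesis
        using r by (simp add: pos_le_divide_eq)
    qed
  qed
qed

lemma ZA_nonneg: "classR A \<Longrightarrow> 0 \<le> ZA A z"
  unfolding ZA_def by (rule cSup_upper[OF _ bdd_above_ZA_set]) auto

lemma ZA_ge: "classR A \<Longrightarrow> 0 < u \<Longrightarrow> z \<in> (\<lambda>a. u *\<^sub>R a) ` A \<Longrightarrow> u \<le> ZA A z"
  unfolding ZA_def by (rule cSup_upper[OF _ bdd_above_ZA_set]) auto

lemma ZA_le:
  assumes "0 \<le> c" "\<And>u. 0 < u \<Longrightarrow> z \<in> (\<lambda>a. u *\<^sub>R a) ` A \<Longrightarrow> u \<le> c" shows "ZA A z \<le> c"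
  unfolding ZA_def by (rule cSup_least) (use assms in auto)

lemma less_ZA_iff:
  assumes "classR A" "0 \<le> x" shows "x < ZA A z \<longleftrightarrow> (\<exists>u>x. z \<in> (\<lambda>a. u *\<^sub>R a) ` A)"
proof -
  have "x < ZA A z \<longleftrightarrow> (\<exists>u\<in>{u. u > 0 \<and> z \<in> (\<lambda>a. u *\<^sub>R a) ` A} \<union> {0}. x < u)"
    unfolding ZA_def by (rule less_cSup_iff[OF _ bdd_above_ZA_set[OF assms(1)]]) simp
  also have "\<dots> \<longleftrightarrow> (\<exists>u>x. z \<in> (\<lambda>a. u *\<^sub>R a) ` A)"
    using assms(2) by (auto intro: le_less_trans)
  finally show ?thesis .
qed

lemma scaleR_notin_if_ZA_less:
  assumes R: "classR A" and u: "ZA A z < u" shows "(1 / u) *\<^sub>R z \<notin> A"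
proof
  have "0 < u"
    using ZA_nonneg[OF R] u by (rule le_less_trans)
  moreover assume "(1 / u) *\<^sub>R z \<in> A"
  ultimately have "u \<le> ZA A z"
    by (intro ZA_ge[OF R]) (auto simp: mem_scaleR_image_iff)
  then show False
    using u by simp
qed

lemma ZA_add_le:
  fixes A :: "(real ^ 'd) set"
  assumes R: "classR A" shows "ZA A (z1 + z2) \<le> ZA A z1 + ZA A z2"
proof (rule ZA_le)
  show "0 \<le> ZA A z1 + ZA A z2"
    using ZA_nonneg[OF R] by (simp add: add_nonneg_nonneg)
  fix u assume u: "0 < u" and zu: "z1 + z2 \<in> (\<lambda>a. u *\<^sub>R a) ` A"
  show "u \<le> ZA A z1 + ZA A z2"
  proof (rule ccontr)
    assume "\<not> u \<le> ZA A z1 + ZA A z2"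
    define e where "e = (u - ZA A z1 - ZA A z2) / 2"
    define u1 where "u1 = ZA A z1 + e"
    define u2 where "u2 = ZA A z2 + e"
    have e: "0 < e"
      using \<open>\<not> u \<le> ZA A z1 + ZA A z2\<close> by (simp add: e_def)
    then have u12: "0 < u1" "0 < u2" "u1 + u2 = u"
      using ZA_nonneg[OF R] by (auto simp: u1_def u2_def e_def add_nonneg_pos)
    have "(1 / u1) *\<^sub>R z1 \<notin> A" "(1 / u2) *\<^sub>R z2 \<notin> A"
      using e by (auto intro!: scaleR_notin_if_ZA_less[OF R] simp: u1_def u2_def)
    moreover have "convex (- A)"
      using R by (simp add: classR_def)
    ultimately have "(u1 / u) *\<^sub>R ((1 / u1) *\<^sub>R z1) + (u2 / u) *\<^sub>R ((1 / u2) *\<^sub>R z2) \<in> - A"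
      using u u12 unfolding convex_def
      by (metis ComplI add_divide_distrib divide_nonneg_pos divide_self less_imp_le order_less_irrefl)
    moreover have "(u1 / u) *\<^sub>R ((1 / u1) *\<^sub>R z1) + (u2 / u) *\<^sub>R ((1 / u2) *\<^sub>R z2) = (1 / u) *\<^sub>R (z1 + z2)"
      using u12 by (simp add: scaleR_add_right)
    ultimately show False
      using zu mem_scaleR_image_iff[OF u] by auto
  qed
qed

lemma ZA_le_add_orthant:
  fixes A :: "(real ^ 'd) set"
  assumes R: "classR A" and y: "y \<in> orthant" shows "ZA A z \<le> ZA A (z + y)"
proof (rule ZA_le)
  show "0 \<le> ZA A (z + y)"
    by (rule ZA_nonneg[OF R])
  fix u assume u: "0 < u" and "z \<in> (\<lambda>a. u *\<^sub>R a) ` A"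
  then have "(1 / u) *\<^sub>R z \<in> A"
    by (simp add: mem_scaleR_image_iff)
  moreover have "(1 / u) *\<^sub>R y \<in> orthant"
    using u y by (simp add: orthant_def)
  ultimately have "(1 / u) *\<^sub>R (z + y) \<in> A"
    using R by (simp add: classR_def scaleR_add_right)
  then show "u \<le> ZA A (z + y)"
    by (intro ZA_ge[OF R u]) (simp add: mem_scaleR_image_iff[OF u])
qed

lemma borel_measurable_ZA:
  fixes A :: "(real ^ 'd) set"
  assumes R: "classR A" shows "ZA A \<in> borel_measurable borel"
proof (subst borel_measurable_iff_greater, intro allI)
  fix x :: real
  show "{w \<in> space borel. x < ZA A w} \<in> sets borel"
  proof (cases "x < 0")
    case True
    then have "{w \<in> space borel. x < ZA A w} = UNIV"
      using ZA_nonneg[OF R] by (auto intro: less_le_trans)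
    then show ?thesis by simp
  next
    case False
    then have "{w \<in> space borel. x < ZA A w} = (\<Union>u\<in>{x<..}. (\<lambda>a. u *\<^sub>R a) ` A)"
      using less_ZA_iff[OF R, of x] by auto
    moreover have "open (\<Union>u\<in>{x<..}. (\<lambda>a. u *\<^sub>R a) ` A)"
      using R False by (intro open_UN ballI open_scaling) (auto simp: classR_def)
    ultimately show ?thesis
      by simp
  qed
qed

lemma orthant_in_sets_borel [measurable]: "orthant \<in> sets borel"
proof -
  have "closed orthant"
    unfolding orthant_def by (simp add: closed_Collect_all closed_Collect_le continuous_on_component)
  then show ?thesis
    by (rule borel_closed)
qed

lemma distr_orthantD:
  assumes "distr_orthant V"
  shows "prob_space V" "sets V = sets borel" "AE z in V. z \<in> orthant"
proof -
  show V: "prob_space V" and S: "sets V = sets borel"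
    using assms by (auto simp: distr_orthant_def)
  interpret prob_space V by fact
  have "orthant \<in> sets V"
    using S by simp
  then show "AE z in V. z \<in> orthant"
    using assms AE_in_set_eq_1 by (simp add: distr_orthant_def emeasure_eq_measure)
qed

lemma nonneg_distribution_VA:
  assumes R: "classR A" and V: "prob_space V" and S: "sets V = sets borel"
  shows "nonneg_distribution (VA A V)"
proof -
  interpret prob_space V by fact
  have ZA: "ZA A \<in> borel_measurable V"
    using borel_measurable_ZA[OF R] by (simp add: measurable_cong_sets[OF S refl])
  have "AE x in distr V borel (ZA A). 0 \<le> x"
    by (subst AE_distr_iff[OF ZA]) (auto intro!: AE_I2 ZA_nonneg[OF R])
  then show ?thesis
    using real_distribution_distr[OF ZA] unfolding VA_def
    by (simp add: nonneg_distribution_def nonneg_distribution_axioms_def)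
qed

lemma tail_VA:
  assumes R: "classR A" and S: "sets V = sets borel"
  shows "tail (VA A V) t = measure V {z. t < ZA A z}"
proof -
  have "ZA A \<in> borel_measurable V"
    using borel_measurable_ZA[OF R] by (simp add: measurable_cong_sets[OF S refl])
  moreover have "space V = UNIV"
    using sets_eq_imp_space_eq[OF S] by simp
  ultimately show ?thesis
    unfolding tail_def VA_def by (subst measure_distr) (auto intro!: arg_cong[where f = "measure V"])
qed

context
  fixes A :: "(real ^ 'd) set" and V1 V2 :: "(real ^ 'd) measure"
  assumes R: "classR A" and V1: "prob_space V1" and V2: "prob_space V2"
    and S1 [measurable_cong]: "sets V1 = sets borel" and S2 [measurable_cong]: "sets V2 = sets borel"
begin

interpretation V1: prob_space V1 by (fact V1)
interpretation V2: prob_space V2 by (fact V2)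
interpretation V12: prob_space "V1 \<Otimes>\<^sub>M V2" by (intro prob_space_pair V1 V2)
interpretation pair_sigma_finite V1 V2 ..

lemma space_V: "space V1 = UNIV" "space V2 = UNIV"
  using sets_eq_imp_space_eq[OF S1] sets_eq_imp_space_eq[OF S2] by simp_all

lemma space_pair_V: "space (V1 \<Otimes>\<^sub>M V2) = UNIV"
  by (simp add: space_pair_measure space_V)

lemma prob_space_vconv: "prob_space (vconv V1 V2)"
  unfolding vconv_def by (rule V12.prob_space_distr) measurable

lemma tail_VA_vconv: "tail (VA A (vconv V1 V2)) t = measure (V1 \<Otimes>\<^sub>M V2) {p. t < ZA A (fst p + snd p)}"
proof -
  have [measurable]: "ZA A \<in> borel_measurable borel"
    by (rule borel_measurable_ZA[OF R])
  have "tail (VA A (vconv V1 V2)) t = measure (vconv V1 V2) {z. t < ZA A z}"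
    by (rule tail_VA[OF R]) (simp add: vconv_def)
  also have "\<dots> = measure (V1 \<Otimes>\<^sub>M V2) {p. t < ZA A (fst p + snd p)}"
    unfolding vconv_def
    by (subst measure_distr) (auto simp: space_pair_V intro!: arg_cong[where f = "measure _"])
  finally show ?thesis .
qed

lemma tail_VA_convolution:
  "tail (VA A V1 \<star> VA A V2) t = measure (V1 \<Otimes>\<^sub>M V2) {p. t < ZA A (fst p) + ZA A (snd p)}"
proof -
  have ZA [measurable]: "ZA A \<in> borel_measurable borel"
    by (rule borel_measurable_ZA[OF R])
  have H: "real_distribution (VA A V1)" "real_distribution (VA A V2)"
    using nonneg_distribution_VA[OF R V1 S1] nonneg_distribution_VA[OF R V2 S2]
    by (auto intro: nonneg_distribution.axioms(1))
  have pair: "VA A V1 \<Otimes>\<^sub>M VA A V2 = distr (V1 \<Otimes>\<^sub>M V2) (borel \<Otimes>\<^sub>M borel) (\<lambda>(x, y). (ZA A x, ZA A y))"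
    unfolding VA_def using H(2)
    by (intro pair_measure_distr prob_space_imp_sigma_finite) (auto simp: VA_def real_distribution_def)
  have "{p. t < fst p + snd p} \<in> sets (borel \<Otimes>\<^sub>M borel :: (real \<times> real) measure)"
    by (intro Collect_in_sets_pair_borel refl) measurable
  then show ?thesis
    unfolding tail_convolution[OF H] pair
    by (subst measure_distr) (auto simp: space_V space_pair_measure intro!: arg_cong[where f = "measure _"])
qed

lemma tail_VA_vconv_le: "tail (VA A (vconv V1 V2)) t \<le> tail (VA A V1 \<star> VA A V2) t"
proof -
  have [measurable]: "ZA A \<in> borel_measurable borel"
    by (rule borel_measurable_ZA[OF R])
  show ?thesis
    unfolding tail_VA_vconv tail_VA_convolution
    by (intro V12.finite_measure_mono) (auto simp: space_pair_V less_le_trans[OF _ ZA_add_le[OF R]]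
        intro!: Collect_in_sets_pair_borel[OF S1 S2])
qed

lemma tail_VA_vconv_ge:
  assumes O1: "AE z in V1. z \<in> orthant" and O2: "AE z in V2. z \<in> orthant"
  shows "tail (VA A V1) t + tail (VA A V2) t - tail (VA A V1) t * tail (VA A V2) t
    \<le> tail (VA A (vconv V1 V2)) t"
proof -
  have [measurable]: "ZA A \<in> borel_measurable borel"
    by (rule borel_measurable_ZA[OF R])
  have orthants: "AE p in V1 \<Otimes>\<^sub>M V2. fst p \<in> orthant \<and> snd p \<in> orthant"
    using O1 O2 by (intro AE_pair_in_Times V1.sigma_finite_measure V2.sigma_finite_measure) auto
  have "tail (VA A V1) t + tail (VA A V2) t - tail (VA A V1) t * tail (VA A V2) t
      = measure (V1 \<Otimes>\<^sub>M V2) {p \<in> space (V1 \<Otimes>\<^sub>M V2). fst p \<in> {z. t < ZA A z} \<or> snd p \<in> {z. t < ZA A z}}"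
    unfolding tail_VA[OF R S1] tail_VA[OF R S2] by (rule measure_pair_either[symmetric, OF V1 V2]) auto
  also have "\<dots> \<le> tail (VA A (vconv V1 V2)) t"
    unfolding tail_VA_vconv
  proof (rule V12.finite_measure_mono_AE)
    show "{p. t < ZA A (fst p + snd p)} \<in> sets (V1 \<Otimes>\<^sub>M V2)"
      by (intro Collect_in_sets_pair_borel[OF S1 S2]) measurable
    show "AE p in V1 \<Otimes>\<^sub>M V2. p \<in> {p \<in> space (V1 \<Otimes>\<^sub>M V2). fst p \<in> {z. t < ZA A z} \<or> snd p \<in> {z. t < ZA A z}}
        \<longrightarrow> p \<in> {p. t < ZA A (fst p + snd p)}"
      using orthants
    proof eventually_elim
      case (elim p)
      then show ?case
        using ZA_le_add_orthant[OF R, of "snd p" "fst p"] ZA_le_add_orthant[OF R, of "fst p" "snd p"]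
        by (auto simp: add.commute)
    qed
  qed
  finally show ?thesis .
qed

end

theorem proposition4p2:
  fixes A :: "(real ^ 'd) set" and V1 V2 :: "(real ^ 'd) measure"
  assumes "classR A"
    and "distr_orthant V1" and "distr_orthant V2"
    and "classL (VA A V1)" and "classL (VA A V2)"
    and "min (Kminus (VA A V1)) (Kminus (VA A V2)) > 0"
  shows "classAstar (VA A (vconv V1 V2)) \<longleftrightarrow> classAstar (convolution (VA A V1) (VA A V2))"
proof -
  note R = assms(1) and V1 = distr_orthantD[OF assms(2)] and V2 = distr_orthantD[OF assms(3)]
  have "nonneg_distribution (VA A V1)" "nonneg_distribution (VA A V2)"
    "nonneg_distribution (VA A (vconv V1 V2))"
    using nonneg_distribution_VA[OF R] prob_space_vconv[OF R V1(1) V2(1) V1(2) V2(2)] V1 V2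
    by (auto simp: vconv_def)
  then show ?thesis
    by (rule classAstar_iff_if_tail_sandwich[OF _ _ _ assms(4,5)
          tail_VA_vconv_ge[OF R V1(1) V2(1) V1(2) V2(2) V1(3) V2(3)]
          tail_VA_vconv_le[OF R V1(1) V2(1) V1(2) V2(2)]])
qed

end
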